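(* Let $m\ge5$ be odd, $h=\frac{m-1}{2}$, and $f_4(x)=x+x^3+x^{2^m-2^{h+2}+2}\in\mathbb{F}_{2^m}[x]$. Let $s^\infty$ be the sequence $s_t=\operatorname{Tr}(f_4(\alpha^t+1))$, $t\ge 0$. If $m\equiv1\pmod 4$ (i.e. $h$ even), the minimal polynomial of $s^\infty$ (generator polynomial of $\mathcal{C}_s$) is $$g_s(x)=\prod_{i\in\Gamma_{(h-1)}}m_{\alpha^{-(i+2^{h})}}(x)\prod_{\substack{2\le j\le h-2\\ j\text{ even}}}\Big(\prod_{i\in\Gamma_{(h-j)}}m_{\alpha^{-(i+2^{h+1-j})}}(x)\prod_{i\in\Gamma_{(h-j)}\setminus\Gamma_{(h-1-j)}}m_{\alpha^{-(i+2^{h-j})}}(x)\Big)\, m_{\alpha^{-3}}(x)\,m_{\alpha^{-1}}(x)\,(x-1),$$ and if $m\equiv 3\pmod 4$ (i.e. $h$ odd), $$g_s(x)=\prod_{i\in\Gamma_{(h-1)}}m_{\alpha^{-(i+2^{h})}}(x)\prod_{\substack{2\le j\le h-2\\ j\text{ even}}}\Big(\prod_{i\in\Gamma_{(h-j)}}m_{\alpha^{-(i+2^{h+1-j})}}(x)\prod_{i\in\Gamma_{(h-j)}\setminus\Gamma_{(h-1-j)}}m_{\alpha^{-(i+2^{h-j})}}(x)\Big)\, m_{\alpha^{-5}}(x)\,(x-1).$$ The linear span of $s^\infty$ is $L_s=1+m(2^{(m-3)/2}+1)$ if $m\equiv1\pmod4$ and $L_s=1+m(2^{(m-3)/2}-1)$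 if $m\equiv3\pmod4$.
   Context: Let $v=2^m-1$, $\alpha$ a primitive element of $\mathbb{F}_{2^m}$, and $\operatorname{Tr}(x)=\sum_{i=0}^{m-1}x^{2^i}$ the absolute trace from $\mathbb{F}_{2^m}$ to $\mathbb{F}_2$. For a polynomial $F$ over $\mathbb{F}_{2^m}$ the binary sequence $s^\infty=(s_t)_{t\ge0}$ is defined by $s_t=\operatorname{Tr}(F(\alpha^t+1))$; it is periodic with period dividing $v$. Its minimal polynomial $g_s(x)$ is the polynomial $1+c_1x+\dots+c_Lx^L\in\mathbb{F}_2[x]$ of least degree $L$ such that $s_i+c_1s_{i-1}+\dots+c_Ls_{i-L}=0$ for all $i\ge L$; its degree $L_s$ is the linear span of $s^\infty$. $\mathcal{C}_s$ denotes the binary cyclic code of length $v$ with generator polynomial $g_s(x)$. For an integer $i$, $m_{\alpha^i}(x)$ is the minimal polynomial of $\alpha^i$ over $\mathbb{F}_2$. For a positive integer $t$, $\Gamma_{(t)}=\{j:1\le j\le 2^t-1,\ j\text{ odd}\}$. Empty products equal $1$. *)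

theory Defs
  imports "HOL-Computational_Algebra.Polynomial" "HOL-Library.Cardinality"
begin

text \<open>The prime field F_2 is taken to be the subfield {0,1} of the ambient finite field
  of characteristic 2; a polynomial over F_2 is a polynomial all of whose coefficients lie in {0,1}.\<close>

definition F2_poly :: "'a::field poly \<Rightarrow> bool" where
  "F2_poly p \<longleftrightarrow> (\<forall>i. coeff p i \<in> {0, 1})"

definition Tr :: "nat \<Rightarrow> 'a::field \<Rightarrow> 'a" where
  "Tr m x = (\<Sum>i<m. x ^ (2 ^ i))"

definition primitive_elem :: "'a::field \<Rightarrow> bool" where
  "primitive_elem a \<longleftrightarrow> a \<noteq> 0 \<and> (\<forall>x. x \<noteq> 0 \<longrightarrow> (\<exists>k::nat. x = a ^ k))"

definition lin_rec_poly :: "(nat \<Rightarrow> 'a::field) \<Rightarrow> 'a poly \<Rightarrow> bool" where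
  "lin_rec_poly s p \<longleftrightarrow> F2_poly p \<and> coeff p 0 = 1 \<and>
     (\<forall>i\<ge>degree p. (\<Sum>k\<le>degree p. coeff p k * s (i - k)) = 0)"

definition seq_min_poly :: "(nat \<Rightarrow> 'a::field) \<Rightarrow> 'a poly" where
  "seq_min_poly s = (THE p. lin_rec_poly s p \<and> (\<forall>q. lin_rec_poly s q \<longrightarrow> degree p \<le> degree q))"

definition lin_span :: "(nat \<Rightarrow> 'a::field) \<Rightarrow> nat" where
  "lin_span s = degree (seq_min_poly s)"

definition min_poly_F2 :: "'a::field \<Rightarrow> 'a poly" where
  "min_poly_F2 b = (THE p. lead_coeff p = 1 \<and> F2_poly p \<and> poly p b = 0 \<and>
     (\<forall>q. lead_coeff q = 1 \<and> F2_poly q \<and> poly q b = 0 \<longrightarrow> degree p \<le> degree q))"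

definition Gamma :: "nat \<Rightarrow> nat set" where
  "Gamma t = {j. 1 \<le> j \<and> j \<le> 2 ^ t - 1 \<and> odd j}"

end

theory Submission
  imports Defs "HOL-Computational_Algebra.Primes" "HOL-Number_Theory.Cong"
begin

text \<open>In characteristic two \<open>Tr (y ^ 2) = Tr y\<close>. Expanding \<open>f\<^sub>4 (x + 1)\<close> with the Frobenius
  map and reducing every exponent to its odd part, pairs of equal terms cancel and
  \<open>s t = 1 + (\<Sum>r\<in>coset_leaders h. Tr m (\<alpha> ^ (t * r)))\<close>. The leaders are odd and below
  \<open>2 ^ (h + 1)\<close>, so they lie in pairwise different cyclotomic cosets modulo \<open>2 ^ m - 1\<close>, each of
  size \<open>m\<close>. Hence \<open>s\<close> is the sum of the \<open>t\<close>-th powers of the \<open>1 + m * card (coset_leaders h)\<close>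
  distinct elements \<open>1\<close> and \<open>\<alpha> ^ (r * 2 ^ i)\<close>. The minimal polynomial of such a power sum is
  the product of \<open>[:- inverse b, 1:]\<close> over its terms \<open>b\<close>, which groups into \<open>x - 1\<close> and the
  minimal polynomials of the \<open>inverse (\<alpha> ^ r)\<close>.\<close>

section \<open>Finite fields of characteristic two\<close>

lemma of_nat_CARD_eq_0: "of_nat CARD('a::{ring_1,finite}) = (0::'a)"
proof -
  have "(\<Sum>x\<in>(UNIV::'a set). x) = (\<Sum>x\<in>UNIV. x + 1)"
    by (rule sum.reindex_bij_witness[of _ "\<lambda>x. x + 1" "\<lambda>x. x - 1"]) auto
  also have "\<dots> = (\<Sum>x\<in>UNIV. x) + of_nat CARD('a)"
    by (simp add: sum.distrib)
  finally show ?thesis by simp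
qed

lemma CHAR_eq_2_if_CARD_eq_power_2:
  assumes "CARD('a::{field,finite}) = 2 ^ m"
  shows "CHAR('a) = 2"
proof -
  have "prime CHAR('a)"
    by (intro prime_CHAR_semidom finite_imp_CHAR_pos) simp
  moreover have "CHAR('a) dvd 2 ^ m"
    using of_nat_CARD_eq_0[where 'a='a] of_nat_eq_0_iff_char_dvd assms by metis
  ultimately have "CHAR('a) dvd 2"
    using prime_dvd_power_nat by blast
  with \<open>prime CHAR('a)\<close> show ?thesis
    by (simp add: primes_dvd_imp_eq)
qed

lemma power_CARD_minus_1_eq_1:
  fixes x :: "'a::{field,finite}"
  assumes "x \<noteq> 0"
  shows "x ^ (CARD('a) - 1) = 1"
proof -
  let ?U = "UNIV - {0::'a}"
  have "(\<Prod>y\<in>?U. y) = (\<Prod>y\<in>?U. x * y)"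
  proof (rule prod.reindex_bij_witness[of _ "\<lambda>y. x * y" "\<lambda>y. inverse x * y"])
  qed (use assms in \<open>auto simp: field_simps\<close>)
  also have "\<dots> = x ^ card ?U * (\<Prod>y\<in>?U. y)"
    by (simp add: prod.distrib)
  finally have "x ^ card ?U = 1"
    by (simp add: prod_zero_iff)
  thus ?thesis
    by (simp add: card_Diff_singleton)
qed

lemma power_CARD_eq_self:
  fixes x :: "'a::{field,finite}"
  shows "x ^ CARD('a) = x"
proof (cases "x = 0")
  case False
  have "CARD('a) = Suc (CARD('a) - 1)"
    using finite_UNIV_card_ge_0[where 'a='a] by simp
  then show ?thesis
    using power_CARD_minus_1_eq_1[OF False] by (metis power_Suc2 mult_1)
qed simp

lemma (in comm_semiring_1) add_power_two_pow_CHAR_2: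
  assumes "CHAR('a) = 2"
  shows "(x + y) ^ 2 ^ k = x ^ 2 ^ k + y ^ 2 ^ k"
  by (rule freshmans_dream') (simp_all add: assms)

lemma (in comm_semiring_1) sum_power2_CHAR_2:
  assumes "CHAR('a) = 2"
  shows "(\<Sum>i\<in>A. f i) ^ 2 = (\<Sum>i\<in>A. f i ^ 2)"
  by (rule freshmans_dream_sum) (simp_all add: assms)

lemma (in semiring_1) of_nat_odd_CHAR_2:
  assumes "CHAR('a) = 2" and "odd k"
  shows "of_nat k = 1"
proof -
  obtain l where "k = 2 * l + 1" using \<open>odd k\<close> by (rule oddE)
  then show ?thesis
    using of_nat_CHAR assms(1) by (metis add_0 mult_zero_left of_nat_1 of_nat_add of_nat_mult)
qed

lemma Tr_add:
  assumes "CHAR('a::field) = 2"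
  shows "Tr m (x + y :: 'a) = Tr m x + Tr m y"
  unfolding Tr_def by (simp add: add_power_two_pow_CHAR_2[OF assms] sum.distrib)

lemma Tr_0 [simp]: "Tr m 0 = 0"
  by (simp add: Tr_def power_0_left)

lemma Tr_sum:
  assumes "CHAR('a::field) = 2"
  shows "Tr m (\<Sum>i\<in>A. f i :: 'a) = (\<Sum>i\<in>A. Tr m (f i))"
  by (induction A rule: infinite_finite_induct) (auto simp: Tr_add[OF assms])

lemma Tr_1:
  assumes "CHAR('a::field) = 2" and "odd m"
  shows "Tr m (1::'a) = 1"
  using of_nat_odd_CHAR_2[OF assms] by (simp add: Tr_def)

lemma Tr_power2:
  fixes y :: "'a::{field,finite}"
  assumes "CARD('a) = 2 ^ m"
  shows "Tr m (y ^ 2) = Tr m y"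
proof -
  define g where "g i = y ^ 2 ^ i" for i
  have "(\<Sum>i<m. g (Suc i)) + g 0 = (\<Sum>i<m. g i) + g m"
    using sum.lessThan_Suc_shift[of g m] sum.lessThan_Suc[of g m] by (simp add: add.commute)
  moreover have "g m = g 0"
    using power_CARD_eq_self[of y] assms by (simp add: g_def)
  ultimately have "(\<Sum>i<m. g (Suc i)) = (\<Sum>i<m. g i)"
    by simp
  thus ?thesis
    unfolding Tr_def g_def by (simp add: power_mult[symmetric] mult.commute)
qed

section \<open>Polynomials over the prime field\<close>

definition poly_frobenius :: "'a::comm_semiring_1 poly \<Rightarrow> 'a poly" where
  "poly_frobenius p = map_poly (\<lambda>c. c ^ 2) p"

lemma coeff_poly_frobenius: "coeff (poly_frobenius p) i = coeff p i ^ 2"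
  unfolding poly_frobenius_def by (simp add: coeff_map_poly)

lemma poly_frobenius_mult:
  assumes "CHAR('a::comm_semiring_1) = 2"
  shows "poly_frobenius (p * q :: 'a poly) = poly_frobenius p * poly_frobenius q"
proof (rule poly_eqI)
  fix n
  have "coeff (poly_frobenius (p * q)) n = (\<Sum>i\<le>n. coeff p i * coeff q (n - i)) ^ 2"
    by (simp add: coeff_poly_frobenius coeff_mult)
  also have "\<dots> = (\<Sum>i\<le>n. coeff p i ^ 2 * coeff q (n - i) ^ 2)"
    by (simp add: sum_power2_CHAR_2[OF assms] power_mult_distrib)
  also have "\<dots> = coeff (poly_frobenius p * poly_frobenius q) n"
    by (simp add: coeff_mult coeff_poly_frobenius)
  finally show "coeff (poly_frobenius (p * q)) n = coeff (poly_frobenius p * poly_frobenius q) n" .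
qed

lemma poly_frobenius_prod:
  assumes "CHAR('a::comm_semiring_1) = 2"
  shows "poly_frobenius (\<Prod>i\<in>A. f i :: 'a poly) = (\<Prod>i\<in>A. poly_frobenius (f i))"
proof (induction A rule: infinite_finite_induct)
  case (insert x F)
  then show ?case by (simp add: poly_frobenius_mult[OF assms])
qed (simp_all add: poly_frobenius_def)

lemma poly_frobenius_linear:
  assumes "CHAR('a::comm_ring_1) = 2"
  shows "poly_frobenius [:- c, 1 :: 'a:] = [:- (c ^ 2), 1:]"
  by (rule poly_eqI)
     (auto simp: coeff_poly_frobenius coeff_pCons uminus_CHAR_2[OF assms] split: nat.splits)

lemma F2_poly_iff_poly_frobenius_eq:
  "F2_poly (p :: 'a::field poly) \<longleftrightarrow> poly_frobenius p = p"
proof -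
  have "c ^ 2 = c \<longleftrightarrow> c \<in> {0, 1}" for c :: 'a
  proof -
    have "c ^ 2 = c \<longleftrightarrow> c * (c - 1) = 0"
      by (simp add: power2_eq_square algebra_simps)
    thus ?thesis by auto
  qed
  thus ?thesis
    unfolding F2_poly_def by (auto simp: poly_eq_iff coeff_poly_frobenius)
qed

lemma F2_poly_mult:
  assumes "CHAR('a::field) = 2" and "F2_poly p" and "F2_poly (q :: 'a poly)"
  shows "F2_poly (p * q)"
  using assms by (simp add: F2_poly_iff_poly_frobenius_eq poly_frobenius_mult)

lemma F2_poly_prod:
  assumes "CHAR('a::field) = 2" and "\<And>i. i \<in> A \<Longrightarrow> F2_poly (f i :: 'a poly)"
  shows "F2_poly (\<Prod>i\<in>A. f i)"
  using assms by (simp add: F2_poly_iff_poly_frobenius_eq poly_frobenius_prod)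

lemma poly_power_two_pow_F2_poly:
  assumes "CHAR('a::field) = 2" and "F2_poly q"
  shows "poly q (x ^ 2 ^ k) = poly q (x :: 'a) ^ 2 ^ k"
proof -
  have square: "poly q (y ^ 2) = poly q y ^ 2" for y :: 'a
  proof -
    have "poly q y ^ 2 = (\<Sum>i\<le>degree q. (coeff q i * y ^ i) ^ 2)"
      unfolding poly_altdef by (rule sum_power2_CHAR_2[OF assms(1)])
    also have "\<dots> = poly q (y ^ 2)"
      using assms(2)
      by (simp add: F2_poly_iff_poly_frobenius_eq poly_eq_iff coeff_poly_frobenius poly_altdef
          power_mult_distrib power_mult[symmetric] mult.commute)
    finally show ?thesis
      by simp
  qed
  show ?thesis
  proof (induction k)
    case (Suc k)
    have "poly q ((x ^ 2 ^ k) ^ 2) = (poly q x ^ 2 ^ k) ^ 2"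
      using Suc square by simp
    then show ?case
      by (simp add: power_mult[symmetric] mult.commute)
  qed simp
qed

lemma F2_poly_prod_conjugates:
  fixes \<beta> :: "'a::{field,finite}"
  assumes card: "CARD('a) = 2 ^ m"
  shows "F2_poly (\<Prod>i<m. [:- (\<beta> ^ 2 ^ i), 1:])"
proof -
  have char: "CHAR('a) = 2"
    using card by (rule CHAR_eq_2_if_CARD_eq_power_2)
  define f where "f i = [:- (\<beta> ^ 2 ^ i), 1:]" for i
  have "(\<Prod>i<m. f (Suc i)) * f 0 = (\<Prod>i<m. f i) * f m"
    using prod.lessThan_Suc_shift[of f m] prod.lessThan_Suc[of f m] by (simp add: mult.commute)
  moreover have "f m = f 0"
    using power_CARD_eq_self[of \<beta>] card by (simp add: f_def)
  moreover have "f 0 \<noteq> 0"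
    by (simp add: f_def)
  ultimately have "(\<Prod>i<m. f (Suc i)) = (\<Prod>i<m. f i)"
    by simp
  moreover have "poly_frobenius (\<Prod>i<m. f i) = (\<Prod>i<m. f (Suc i))"
    by (simp add: f_def poly_frobenius_prod[OF char] poly_frobenius_linear[OF char]
        power_mult[symmetric] mult.commute)
  ultimately show ?thesis
    by (simp add: F2_poly_iff_poly_frobenius_eq f_def)
qed

lemma degree_ge_F2_poly_root:
  assumes char: "CHAR('a::field) = 2" and inj: "inj_on (\<lambda>i. \<beta> ^ 2 ^ i) {..<m}"
    and q: "F2_poly q" "q \<noteq> 0" "poly q (\<beta> :: 'a) = 0"
  shows "m \<le> degree q"
proof -
  have "(\<lambda>i. \<beta> ^ 2 ^ i) ` {..<m} \<subseteq> {z. poly q z = 0}"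
    using q poly_power_two_pow_F2_poly[OF char] by auto
  then have "card ((\<lambda>i. \<beta> ^ 2 ^ i) ` {..<m}) \<le> card {z. poly q z = 0}"
    using q(2) by (intro card_mono poly_roots_finite)
  also have "\<dots> \<le> degree q"
    using q(2) by (rule card_poly_roots_bound)
  finally show ?thesis
    using inj by (simp add: card_image)
qed

lemma min_poly_F2_eq_prod_conjugates:
  fixes \<beta> :: "'a::{field,finite}"
  assumes card: "CARD('a) = 2 ^ m" and inj: "inj_on (\<lambda>i. \<beta> ^ 2 ^ i) {..<m}"
  shows "min_poly_F2 \<beta> = (\<Prod>i<m. [:- (\<beta> ^ 2 ^ i), 1:])"
proof -
  have char: "CHAR('a) = 2"
    using card by (rule CHAR_eq_2_if_CARD_eq_power_2)
  define Q where "Q = (\<Prod>i<m. [:- (\<beta> ^ 2 ^ i), 1:])"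
  define conj where "conj = (\<lambda>i. \<beta> ^ 2 ^ i) ` {..<m}"
  have degQ: "degree Q = m"
    unfolding Q_def by (subst degree_prod_eq_sum_degree) auto
  have rootQ: "poly Q z = 0" if "z \<in> conj" for z
    using that by (auto simp: Q_def conj_def poly_prod intro!: prod_zero)
  have "m \<noteq> 0"
    using card of_nat_CARD_eq_0[where 'a='a] by auto
  then have "\<beta> \<in> conj"
    by (force simp: conj_def)
  moreover have "lead_coeff Q = 1" "F2_poly Q"
    unfolding Q_def using card by (simp_all add: lead_coeff_prod F2_poly_prod_conjugates)
  moreover have "m \<le> degree q" if "lead_coeff q = 1" "F2_poly q" "poly q \<beta> = 0" for q
    using that by (intro degree_ge_F2_poly_root[OF char inj]) auto
  ultimately have minimal: "lead_coeff Q = 1 \<and> F2_poly Q \<and> poly Q \<beta> = 0 \<and>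
      (\<forall>q. lead_coeff q = 1 \<and> F2_poly q \<and> poly q \<beta> = 0 \<longrightarrow> degree Q \<le> degree q)"
    using rootQ degQ by auto
  have "p = Q" if p: "lead_coeff p = 1 \<and> F2_poly p \<and> poly p \<beta> = 0 \<and>
      (\<forall>q. lead_coeff q = 1 \<and> F2_poly q \<and> poly q \<beta> = 0 \<longrightarrow> degree p \<le> degree q)" for p
  proof (rule poly_eqI_degree_lead_coeff[where n = m and A = conj])
    have "p \<noteq> 0"
      using p by auto
    then have "degree p = m"
      using p minimal degQ degree_ge_F2_poly_root[OF char inj, of p] by force
    then show "coeff p m = coeff Q m" "degree p \<le> m"
      using p minimal degQ by simp_all
    show "m \<le> card conj" "degree Q \<le> m"
      using inj degQ by (simp_all add: conj_def card_image)
    show "poly p z = poly Q z" if "z \<in> conj" for z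
      using that p rootQ poly_power_two_pow_F2_poly[OF char] by (auto simp: conj_def)
  qed
  then show ?thesis
    unfolding min_poly_F2_def Q_def[symmetric] using minimal by (intro the_equality)
qed

section \<open>Sequences that are sums of powers\<close>

lemma sum_power_shift_CARD_minus_1:
  fixes z :: "'a::{field,finite}"
  assumes "z \<noteq> 0" "z \<noteq> 1"
  shows "(\<Sum>j<CARD('a) - 1. z ^ (L + j)) = 0"
proof -
  have "(\<Sum>j<CARD('a) - 1. z ^ (L + j)) = z ^ L * (\<Sum>j<CARD('a) - 1. z ^ j)"
    by (simp add: power_add sum_distrib_left)
  also have "(\<Sum>j<CARD('a) - 1. z ^ j) = 0"
    using geometric_sum[OF assms(2)] power_CARD_minus_1_eq_1[OF assms(1)] by simp
  finally show ?thesis by simp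
qed

lemma of_nat_CARD_minus_1: "of_nat (CARD('a::{field,finite}) - 1) = (-1 :: 'a)"
proof -
  have "CARD('a) \<ge> 1"
    using finite_UNIV_card_ge_0[where 'a='a] by simp
  then show ?thesis
    using of_nat_CARD_eq_0[where 'a='a] by (simp add: of_nat_diff)
qed

lemma recurrence_sum_power_sum:
  fixes q :: "'a::field poly"
  assumes "0 \<notin> B" and "degree q \<le> i"
  shows "(\<Sum>k\<le>degree q. coeff q k * (\<Sum>b\<in>B. b ^ (i - k))) = (\<Sum>b\<in>B. b ^ i * poly q (inverse b))"
proof -
  have "b ^ (i - k) = b ^ i * inverse b ^ k" if "b \<in> B" "k \<le> degree q" for b k
  proof -
    have "b \<noteq> 0" "k \<le> i"
      using that assms by auto
    then show ?thesis
      by (simp add: power_diff power_inverse divide_inverse)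
  qed
  then have "(\<Sum>k\<le>degree q. coeff q k * b ^ (i - k)) = b ^ i * poly q (inverse b)" if "b \<in> B" for b
    using that by (simp add: poly_altdef sum_distrib_left mult_ac)
  then show ?thesis
    by (simp add: sum_distrib_left sum.swap[of _ B])
qed

text \<open>If \<open>q\<close> annihilates \<open>s\<close>, then \<open>\<Sum>b\<in>B. b ^ i * poly q (inverse b) = 0\<close> for all large \<open>i\<close>;
  multiplying by \<open>inverse b\<^sub>0 ^ i\<close> and summing over a full period isolates the term of \<open>b\<^sub>0\<close>.\<close>

lemma lin_rec_poly_power_sum_root:
  fixes s :: "nat \<Rightarrow> 'a::{field,finite}"
  assumes nz: "0 \<notin> B" and s: "\<And>t. s t = (\<Sum>b\<in>B. b ^ t)"
    and q: "lin_rec_poly s q" and b0: "b0 \<in> B"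
  shows "poly q (inverse b0) = 0"
proof -
  define L where "L = degree q"
  define N where "N = CARD('a) - 1"
  define c where "c b = poly q (inverse b)" for b
  have vanish: "(\<Sum>b\<in>B. b ^ i * c b) = 0" if "L \<le> i" for i
  proof -
    have "(\<Sum>b\<in>B. b ^ i * c b) = (\<Sum>k\<le>degree q. coeff q k * s (i - k))"
      unfolding s c_def using recurrence_sum_power_sum[OF nz, of q i] that L_def by simp
    also have "\<dots> = 0"
      using q that unfolding lin_rec_poly_def L_def by blast
    finally show ?thesis .
  qed
  have "b0 \<noteq> 0" using b0 nz by auto
  have "0 = (\<Sum>j<N. inverse b0 ^ (L + j) * (\<Sum>b\<in>B. b ^ (L + j) * c b))"
    using vanish by simp
  also have "\<dots> = (\<Sum>b\<in>B. c b * (\<Sum>j<N. (b * inverse b0) ^ (L + j)))"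
    by (simp add: sum_distrib_left sum.swap[of _ B] power_mult_distrib mult_ac)
  also have "\<dots> = c b0 * (\<Sum>j<N. (b0 * inverse b0) ^ (L + j))
      + (\<Sum>b\<in>B - {b0}. c b * (\<Sum>j<N. (b * inverse b0) ^ (L + j)))"
    using b0 by (simp add: sum.remove)
  also have "(\<Sum>b\<in>B - {b0}. c b * (\<Sum>j<N. (b * inverse b0) ^ (L + j))) = 0"
  proof (rule sum.neutral, rule ballI)
    fix b assume "b \<in> B - {b0}"
    then have "b * inverse b0 \<noteq> 0" "b * inverse b0 \<noteq> 1"
      using nz \<open>b0 \<noteq> 0\<close> by (auto simp: field_simps)
    then have "(\<Sum>j<N. (b * inverse b0) ^ (L + j)) = 0"
      unfolding N_def by (rule sum_power_shift_CARD_minus_1)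
    then show "c b * (\<Sum>j<N. (b * inverse b0) ^ (L + j)) = 0"
      by simp
  qed
  also have "(\<Sum>j<N. (b0 * inverse b0) ^ (L + j)) = of_nat N"
    using \<open>b0 \<noteq> 0\<close> by simp
  also have "(of_nat N :: 'a) = -1"
    unfolding N_def by (rule of_nat_CARD_minus_1)
  finally show ?thesis
    by (simp add: c_def)
qed

lemma lin_rec_poly_prod_power_sum:
  fixes s :: "nat \<Rightarrow> 'a::{field,finite}"
  assumes nz: "0 \<notin> B" and s: "\<And>t. s t = (\<Sum>b\<in>B. b ^ t)"
    and F2: "F2_poly (\<Prod>b\<in>B. [:- (inverse b), 1:])"
  shows "lin_rec_poly s (\<Prod>b\<in>B. [:- (inverse b), 1:])"
  unfolding lin_rec_poly_def
proof (intro conjI allI impI)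
  define P where "P = (\<Prod>b\<in>B. [:- (inverse b), 1:])"
  have "coeff P 0 = (\<Prod>b\<in>B. - inverse b)"
    by (simp add: P_def poly_0_coeff_0[symmetric] poly_prod)
  then have "coeff P 0 \<noteq> 0"
    using nz by (auto simp: prod_zero_iff)
  then show "coeff P 0 = 1"
    using F2 unfolding P_def F2_poly_def by blast
  fix i assume i: "degree P \<le> i"
  have "(\<Sum>k\<le>degree P. coeff P k * s (i - k)) = (\<Sum>b\<in>B. b ^ i * poly P (inverse b))"
    unfolding s using recurrence_sum_power_sum[OF nz i] .
  also have "\<dots> = 0"
    by (rule sum.neutral) (auto simp: P_def poly_prod prod_zero_iff)
  finally show "(\<Sum>k\<le>degree P. coeff P k * s (i - k)) = 0" .
qed (fact F2)

lemma card_le_degree_lin_rec_poly_power_sum: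
  fixes s :: "nat \<Rightarrow> 'a::{field,finite}"
  assumes nz: "0 \<notin> B" and s: "\<And>t. s t = (\<Sum>b\<in>B. b ^ t)" and q: "lin_rec_poly s q"
  shows "card B \<le> degree q"
proof -
  have "q \<noteq> 0"
    using q unfolding lin_rec_poly_def by auto
  have "inverse ` B \<subseteq> {x. poly q x = 0}"
    using lin_rec_poly_power_sum_root[OF nz s q] by auto
  then have "card (inverse ` B) \<le> card {x. poly q x = 0}"
    using \<open>q \<noteq> 0\<close> by (intro card_mono poly_roots_finite)
  also have "\<dots> \<le> degree q"
    using \<open>q \<noteq> 0\<close> by (rule card_poly_roots_bound)
  finally show ?thesis
    by (simp add: card_image inj_on_def)
qed

theorem seq_min_poly_power_sum:
  fixes s :: "nat \<Rightarrow> 'a::{field,finite}"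
  assumes nz: "0 \<notin> B" and s: "\<And>t. s t = (\<Sum>b\<in>B. b ^ t)"
    and F2: "F2_poly (\<Prod>b\<in>B. [:- (inverse b), 1:])"
  shows "seq_min_poly s = (\<Prod>b\<in>B. [:- (inverse b), 1:])" and "lin_span s = card B"
proof -
  define P where "P = (\<Prod>b\<in>B. [:- (inverse b), 1:])"
  have degP: "degree P = card B"
    unfolding P_def by (subst degree_prod_eq_sum_degree) auto
  have recP: "lin_rec_poly s P"
    unfolding P_def using nz s F2 by (rule lin_rec_poly_prod_power_sum)
  note degree_ge = card_le_degree_lin_rec_poly_power_sum[OF nz s]
  have "p = P" if p: "lin_rec_poly s p \<and> (\<forall>q. lin_rec_poly s q \<longrightarrow> degree p \<le> degree q)" for p
  proof (rule poly_eqI_degree[where A = "insert 0 (inverse ` B)"])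
    have "0 \<notin> inverse ` B"
      using nz by auto
    then have "card (insert 0 (inverse ` B)) = Suc (card B)"
      by (simp add: card_image inj_on_def)
    then show "degree p < card (insert 0 (inverse ` B))" "degree P < card (insert 0 (inverse ` B))"
      using p degree_ge[of p] recP degP by force+
    have "poly p x = 0 \<and> poly P x = 0" if "x \<in> inverse ` B" for x
      using that lin_rec_poly_power_sum_root[OF nz s] p recP by auto
    then show "poly p x = poly P x" if "x \<in> insert 0 (inverse ` B)" for x
      using that p recP unfolding lin_rec_poly_def by (auto simp: poly_0_coeff_0)
  qed
  then have "seq_min_poly s = P"
    unfolding seq_min_poly_def using recP degree_ge degP by (intro the_equality) auto
  then show "seq_min_poly s = (\<Prod>b\<in>B. [:- (inverse b), 1:])" and "lin_span s = card B"
    by (simp_all add: P_def[symmetric] lin_span_def degP)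
qed

section \<open>Odd numbers in dyadic blocks\<close>

lemma finite_Gamma [simp]: "finite (Gamma t)"
  unfolding Gamma_def by (rule finite_subset[of _ "{..2 ^ t}"]) auto

lemma Gamma_1 [simp]: "Gamma (Suc 0) = {1}"
  and Gamma_2: "Gamma 2 = {1, 3}"
  unfolding Gamma_def by (auto, presburger)

lemma Gamma_mono: "a \<le> b \<Longrightarrow> Gamma a \<subseteq> Gamma b"
  unfolding Gamma_def by (auto intro: order.trans[OF _ diff_le_mono])

lemma card_Gamma: "card (Gamma (Suc t)) = 2 ^ t"
proof -
  have "Gamma (Suc t) = (\<lambda>k. 2 * k + 1) ` {..<2 ^ t}"
  proof (intro set_eqI iffI)
    fix x assume "x \<in> Gamma (Suc t)"
    then show "x \<in> (\<lambda>k. 2 * k + 1) ` {..<2 ^ t}"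
      unfolding Gamma_def by (auto elim!: oddE)
  qed (auto simp: Gamma_def)
  then show ?thesis
    by (simp add: card_image inj_on_def)
qed

definition low_block :: "nat \<Rightarrow> nat set" where
  "low_block c = (\<lambda>i. i + 2 ^ c) ` Gamma (c - 1)"

definition high_block :: "nat \<Rightarrow> nat set" where
  "high_block c = (\<lambda>i. i + 2 ^ c) ` (Gamma c - Gamma (c - 1))"

lemma finite_low_block [simp]: "finite (low_block c)"
  and finite_high_block [simp]: "finite (high_block c)"
  by (simp_all add: low_block_def high_block_def)

lemma low_block_bounds:
  assumes "x \<in> low_block c"
  shows "2 ^ c < x" "x < 2 ^ c + 2 ^ (c - 1)" "c \<ge> 1 \<Longrightarrow> odd x"
  using assms unfolding low_block_def Gamma_def
  by (auto simp: less_eq_Suc_le[symmetric] dest: le_less_trans[OF _ diff_less[of 1]])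

lemma high_block_bounds:
  assumes "x \<in> high_block c" and "c \<ge> 1"
  shows "2 ^ c + 2 ^ (c - 1) \<le> x" "x < 2 ^ Suc c" "odd x"
proof -
  obtain i where i: "i \<in> Gamma c" "i \<notin> Gamma (c - 1)" "x = i + 2 ^ c"
    using assms(1) unfolding high_block_def by auto
  have "(2::nat) ^ c = 2 * 2 ^ (c - 1)"
    using assms(2) by (cases c) auto
  moreover have "1 \<le> i" "i \<le> 2 ^ c - 1" "odd i" "\<not> i \<le> 2 ^ (c - 1) - 1"
    using i(1,2) unfolding Gamma_def by auto
  ultimately show "2 ^ c + 2 ^ (c - 1) \<le> x" "x < 2 ^ Suc c" "odd x"
    using i(3) assms(2) by auto
qed

lemma low_block_upper:
  assumes "x \<in> low_block c"
  shows "x < 2 ^ Suc c"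
proof -
  have "(2::nat) ^ (c - 1) \<le> 2 ^ c"
    by (rule power_increasing) auto
  then show ?thesis
    using low_block_bounds(2)[OF assms] by (simp only: power_Suc)
qed

lemma power2_block_unique:
  assumes "2 ^ c \<le> (x::nat)" "x < 2 ^ Suc c" "2 ^ c' \<le> x" "x < 2 ^ Suc c'"
  shows "c = c'"
proof (rule ccontr)
  assume "c \<noteq> c'"
  then have "Suc c \<le> c' \<or> Suc c' \<le> c"
    by auto
  then show False
    using power_increasing[of "Suc c" c' "2::nat"] power_increasing[of "Suc c'" c "2::nat"] assms
    by auto
qed

lemma disjoint_low_blocks: "c \<noteq> c' \<Longrightarrow> low_block c \<inter> low_block c' = {}"
  using power2_block_unique low_block_bounds(1) low_block_upper
  by (metis disjoint_iff less_imp_le)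

lemma disjoint_high_blocks:
  "c \<noteq> c' \<Longrightarrow> c \<ge> 1 \<Longrightarrow> c' \<ge> 1 \<Longrightarrow> high_block c \<inter> high_block c' = {}"
  using power2_block_unique high_block_bounds
  by (metis (no_types, lifting) add_leD1 disjoint_iff)

lemma disjoint_low_high_block: "c' \<ge> 1 \<Longrightarrow> low_block c \<inter> high_block c' = {}"
proof (intro disjoint_iff[THEN iffD2] allI impI)
  fix x assume c': "c' \<ge> 1" and x: "x \<in> low_block c"
  show "x \<notin> high_block c'"
  proof
    assume x': "x \<in> high_block c'"
    have "c = c'"
      using power2_block_unique[of c x c'] low_block_bounds(1)[OF x] low_block_upper[OF x]
        high_block_bounds[OF x' c'] by simp
    then show False
      using low_block_bounds(2)[OF x] high_block_bounds(1)[OF x' c'] by simp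
  qed
qed

lemma card_low_block: "card (low_block (Suc (Suc c))) = 2 ^ c"
  and card_high_block: "card (high_block (Suc (Suc c))) = 2 ^ c"
proof -
  show "card (low_block (Suc (Suc c))) = 2 ^ c"
    by (simp add: low_block_def card_image card_Gamma)
  have "card (high_block (Suc (Suc c))) = card (Gamma (Suc (Suc c))) - card (Gamma (Suc c))"
    unfolding high_block_def using Gamma_mono[of "Suc c" "Suc (Suc c)"]
    by (simp add: card_image card_Diff_subset)
  then show "card (high_block (Suc (Suc c))) = 2 ^ c"
    by (simp only: card_Gamma) simp
qed

lemma Gamma_Suc:
  assumes "q \<ge> 1"
  shows "Gamma (Suc q) = Gamma q \<union> low_block q \<union> high_block q"
proof -
  have "Gamma (Suc q) = Gamma q \<union> (\<lambda>i. i + 2 ^ q) ` Gamma q"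
  proof (intro equalityI subsetI)
    fix x assume x: "x \<in> Gamma (Suc q)"
    show "x \<in> Gamma q \<union> (\<lambda>i. i + 2 ^ q) ` Gamma q"
    proof (cases "x < 2 ^ q")
      case False
      have "even ((2::nat) ^ q)"
        using assms by simp
      then have "x \<noteq> 2 ^ q"
        using x by (auto simp: Gamma_def)
      then have "x - 2 ^ q \<in> Gamma q" "x = x - 2 ^ q + 2 ^ q"
        using x False \<open>even (2 ^ q)\<close> unfolding Gamma_def by auto
      then show ?thesis by blast
    qed (use x in \<open>auto simp: Gamma_def\<close>)
  qed (use assms in \<open>auto simp: Gamma_def\<close>)
  moreover have "Gamma q = Gamma (q - 1) \<union> (Gamma q - Gamma (q - 1))"
    using Gamma_mono[of "q - 1" q] by auto
  ultimately show ?thesis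
    unfolding low_block_def high_block_def by blast
qed

lemma atLeastLessThan_power2_Suc:
  "{1..<(2::nat) ^ Suc q} = Gamma (Suc q) \<union> (\<lambda>u. 2 * u) ` {1..<2 ^ q}"
  unfolding Gamma_def by (auto elim!: evenE)

section \<open>The coset leaders\<close>

definition even_indices :: "nat \<Rightarrow> nat set" where
  "even_indices h = {j. 2 \<le> j \<and> j \<le> h - 2 \<and> even j}"

definition extra_leaders :: "nat \<Rightarrow> nat set" where
  "extra_leaders h = (if even h then {3, 1} else {5})"

text \<open>The exponents \<open>r\<close> of the factors \<open>min_poly_F2 (inverse (\<alpha> ^ r))\<close> of \<open>g\<^sub>s\<close>, following
  the product in the theorem.\<close>

definition coset_leaders :: "nat \<Rightarrow> nat set" where
  "coset_leaders h = low_block h \<union> (\<Union>j\<in>even_indices h. low_block (h + 1 - j) \<union> high_block (h - j))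
     \<union> extra_leaders h"

lemma finite_even_indices [simp]: "finite (even_indices h)"
  unfolding even_indices_def by (rule finite_subset[of _ "{..h}"]) auto

lemma even_indices_empty: "h \<le> 3 \<Longrightarrow> even_indices h = {}"
  unfolding even_indices_def by auto

lemma even_indices_add_2:
  assumes "h \<ge> 2"
  shows "even_indices (h + 2) = insert 2 ((\<lambda>j. j + 2) ` even_indices h)"
proof (intro equalityI subsetI)
  fix j assume "j \<in> even_indices (h + 2)"
  then show "j \<in> insert 2 ((\<lambda>j. j + 2) ` even_indices h)"
    unfolding even_indices_def by (auto intro!: image_eqI[of _ _ "j - 2"])
qed (use assms in \<open>auto simp: even_indices_def\<close>)

lemma finite_extra_leaders [simp]: "finite (extra_leaders h)"
  by (simp add: extra_leaders_def)

lemma coset_leaders_bounds: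
  assumes h: "h \<ge> 2" and r: "r \<in> coset_leaders h"
  shows "odd r" "0 < r" "r < 2 ^ Suc h"
proof -
  have pow_le: "(2::nat) ^ Suc c \<le> 2 ^ Suc h" if "c \<le> h" for c
    using that by (intro power_increasing) auto
  have "odd r \<and> r < 2 ^ Suc h"
    using r unfolding coset_leaders_def
  proof (elim UnE UN_E)
    assume "r \<in> low_block h"
    then show ?thesis
      using low_block_bounds(3) low_block_upper h by simp
  next
    fix j assume j: "j \<in> even_indices h" and r: "r \<in> low_block (h + 1 - j)"
    have c: "1 \<le> h + 1 - j" "h + 1 - j \<le> h"
      using j by (auto simp: even_indices_def)
    have "r < 2 ^ Suc h"
      using low_block_upper[OF r] pow_le[OF c(2)] by (rule less_le_trans)
    then show ?thesis
      using low_block_bounds(3)[OF r c(1)] by simp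
  next
    fix j assume j: "j \<in> even_indices h" and r: "r \<in> high_block (h - j)"
    have c: "1 \<le> h - j" "h - j \<le> h"
      using j by (auto simp: even_indices_def)
    have "r < 2 ^ Suc h"
      using high_block_bounds(2)[OF r c(1)] pow_le[OF c(2)] by (rule less_le_trans)
    then show ?thesis
      using high_block_bounds(3)[OF r c(1)] by simp
  next
    assume "r \<in> extra_leaders h"
    moreover have "(2::nat) ^ 3 \<le> 2 ^ Suc h"
      using h by (intro power_increasing) auto
    ultimately show ?thesis
      by (auto simp: extra_leaders_def split: if_splits)
  qed
  then show "odd r" "0 < r" "r < 2 ^ Suc h"
    by (auto intro: odd_pos)
qed

lemma three_in_high_block: "3 \<in> high_block 1"
  and five_in_low_block: "5 \<in> low_block 2"
  by (auto simp: high_block_def low_block_def Gamma_def intro!: image_eqI[of _ _ 1])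

lemma one_notin_blocks: "1 \<notin> low_block c" "1 \<notin> high_block c"
  by (auto simp: low_block_def high_block_def Gamma_def)

lemma extra_leaders_notin_blocks:
  assumes h: "h \<ge> 2" and r: "r \<in> extra_leaders h"
  shows "r \<notin> low_block h"
    and "j \<in> even_indices h \<Longrightarrow> r \<notin> low_block (h + 1 - j)"
    and "j \<in> even_indices h \<Longrightarrow> r \<notin> high_block (h - j)"
proof -
  have low: "r \<notin> low_block c" if "even h \<or> c \<ge> 3" for c
  proof (cases "even h")
    case True
    then show ?thesis
      using r one_notin_blocks disjoint_low_high_block[of 1 c] three_in_high_block
      by (auto simp: extra_leaders_def)
  next
    case False
    then show ?thesis
      using r that disjoint_low_blocks[of 2 c] five_in_low_block by (auto simp: extra_leaders_def)
  qed
  have high: "r \<notin> high_block c" if "c \<ge> 2" for c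
    using r that one_notin_blocks disjoint_high_blocks[of 1 c] three_in_high_block
      disjoint_low_high_block[of c 2] five_in_low_block
    by (auto simp: extra_leaders_def split: if_splits)
  have "even h \<or> h \<ge> 3"
    using h by presburger
  then show "r \<notin> low_block h"
    by (rule low)
  show "r \<notin> low_block (h + 1 - j)" "r \<notin> high_block (h - j)" if "j \<in> even_indices h"
  proof -
    have "h + 1 - j \<ge> 3" "h - j \<ge> 2"
      using that by (auto simp: even_indices_def)
    then show "r \<notin> low_block (h + 1 - j)" "r \<notin> high_block (h - j)"
      using low high by blast+
  qed
qed

context comm_monoid_set
begin

lemma low_block_reindex: "F g (low_block c) = F (\<lambda>i. g (i + 2 ^ c)) (Gamma (c - 1))"
  and high_block_reindex: "F g (high_block c) = F (\<lambda>i. g (i + 2 ^ c)) (Gamma c - Gamma (c - 1))"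
  by (simp_all add: low_block_def high_block_def reindex)

lemma coset_leaders_decomp:
  assumes h: "h \<ge> 2"
  shows "F g (coset_leaders h) =
    f (f (F g (low_block h))
         (F (\<lambda>j. f (F g (low_block (h + 1 - j))) (F g (high_block (h - j)))) (even_indices h)))
      (F g (extra_leaders h))"
proof -
  have J: "2 \<le> j" "j \<le> h - 2" if "j \<in> even_indices h" for j
    using that by (auto simp: even_indices_def)
  let ?U = "\<Union>j\<in>even_indices h. low_block (h + 1 - j) \<union> high_block (h - j)"
  have "low_block h \<inter> (low_block (h + 1 - j) \<union> high_block (h - j)) = {}"
    if "j \<in> even_indices h" for j
  proof -
    have c: "h \<noteq> h + 1 - j" "h - j \<ge> 1"
      using J[OF that] by auto
    show ?thesis
      using disjoint_low_blocks[OF c(1)] disjoint_low_high_block[OF c(2)] by blast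
  qed
  then have disj_low: "low_block h \<inter> ?U = {}"
    by blast
  have disj_extra: "(low_block h \<union> ?U) \<inter> extra_leaders h = {}"
    using extra_leaders_notin_blocks[OF h] by blast
  have disj_pairs: "(low_block (h + 1 - j) \<union> high_block (h - j)) \<inter>
      (low_block (h + 1 - j') \<union> high_block (h - j')) = {}"
    if "j \<in> even_indices h" "j' \<in> even_indices h" "j \<noteq> j'" for j j'
  proof -
    have c: "h + 1 - j \<noteq> h + 1 - j'" "h - j \<noteq> h - j'" "h - j \<ge> 1" "h - j' \<ge> 1"
      using J[OF that(1)] J[OF that(2)] that(3) by auto
    show ?thesis
      using disjoint_low_blocks[OF c(1)] disjoint_high_blocks[OF c(2-4)]
        disjoint_low_high_block[OF c(3)] disjoint_low_high_block[OF c(4)] by blast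
  qed
  have disj_pair: "low_block (h + 1 - j) \<inter> high_block (h - j) = {}" if "j \<in> even_indices h" for j
    using J[OF that] by (intro disjoint_low_high_block) auto
  have "F g (coset_leaders h) = f (F g (low_block h \<union> ?U)) (F g (extra_leaders h))"
    unfolding coset_leaders_def by (rule union_disjoint[OF _ _ disj_extra]) simp_all
  also have "F g (low_block h \<union> ?U) = f (F g (low_block h)) (F g ?U)"
    by (rule union_disjoint[OF _ _ disj_low]) simp_all
  also have "F g ?U = F (\<lambda>j. F g (low_block (h + 1 - j) \<union> high_block (h - j))) (even_indices h)"
    using disj_pairs by (intro UNION_disjoint) auto
  also have "\<dots> = F (\<lambda>j. f (F g (low_block (h + 1 - j))) (F g (high_block (h - j)))) (even_indices h)"
    using disj_pair by (intro cong refl union_disjoint) auto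
  finally show ?thesis .
qed

lemma coset_leaders_add_2:
  assumes h: "h \<ge> 2"
  shows "f (F g (coset_leaders (h + 2))) (F g (low_block h)) =
    f (F g (coset_leaders h))
      (f (F g (low_block (h + 2))) (f (F g (low_block (h + 1))) (F g (high_block h))))"
proof -
  define G where "G j = f (F g (low_block (h + 1 - j))) (F g (high_block (h - j)))" for j
  have J: "F (\<lambda>j. f (F g (low_block (h + 2 + 1 - j))) (F g (high_block (h + 2 - j)))) (even_indices (h + 2))
      = f (f (F g (low_block (h + 1))) (F g (high_block h))) (F G (even_indices h))"
    unfolding even_indices_add_2[OF h]
    by (subst insert) (auto simp: reindex inj_on_def G_def even_indices_def)
  have extra: "extra_leaders (h + 2) = extra_leaders h"
    by (simp add: extra_leaders_def)
  show ?thesis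
    unfolding coset_leaders_decomp[OF h] coset_leaders_decomp[OF le_add2[of 2 h]] J extra
      G_def[symmetric]
    by (simp only: ac_simps)
qed

end

lemma sum_Gamma_Suc:
  assumes "q \<ge> 1"
  shows "sum F (Gamma (Suc q)) = sum F (Gamma q) + sum F (low_block q) + sum F (high_block q)"
proof -
  have "x < 2 ^ q" if "x \<in> Gamma q" for x
    using that by (auto simp: Gamma_def)
  moreover have "2 ^ q < x" if "x \<in> low_block q \<union> high_block q" for x
  proof (cases "x \<in> low_block q")
    case False
    then have "2 ^ q + 2 ^ (q - 1) \<le> x"
      using that high_block_bounds(1)[OF _ assms] by blast
    moreover have "(0::nat) < 2 ^ (q - 1)"
      by simp
    ultimately show ?thesis
      by linarith
  qed (rule low_block_bounds(1))
  ultimately have "Gamma q \<inter> (low_block q \<union> high_block q) = {}"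
    by fastforce
  moreover have "low_block q \<inter> high_block q = {}"
    using assms by (rule disjoint_low_high_block)
  ultimately show ?thesis
    unfolding Gamma_Suc[OF assms] Un_assoc by (simp add: sum.union_disjoint add.assoc)
qed

lemma sum_atLeastLessThan_power2_odd_parts:
  fixes F :: "nat \<Rightarrow> 'b::comm_monoid_add"
  assumes F: "\<And>v. F (2 * v) = F v"
  shows "(\<Sum>u\<in>{1..<2 ^ q}. F u) = (\<Sum>k<q. sum F (Gamma (Suc k)))"
proof (induction q)
  case (Suc q)
  have "(\<Sum>u\<in>{1..<2 ^ Suc q}. F u) = sum F (Gamma (Suc q)) + (\<Sum>u\<in>{1..<2 ^ q}. F (2 * u))"
    unfolding atLeastLessThan_power2_Suc
    by (subst sum.union_disjoint) (auto simp: Gamma_def sum.reindex inj_on_def)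
  then show ?case
    using Suc F by (simp add: add.commute)
qed simp

lemma sum_atLeastLessThan_power2_shift_odd_parts:
  fixes F :: "nat \<Rightarrow> 'b::comm_monoid_add"
  assumes F: "\<And>v. F (2 * v) = F v"
  shows "(\<Sum>u\<in>{1..<2 ^ q}. F (u + 2 ^ Suc q)) = (\<Sum>k<q. sum F (low_block (Suc q - k)))"
proof (induction q)
  case (Suc q)
  have "(\<Sum>u\<in>{1..<2 ^ Suc q}. F (u + 2 ^ Suc (Suc q)))
      = (\<Sum>i\<in>Gamma (Suc q). F (i + 2 ^ Suc (Suc q))) + (\<Sum>u\<in>{1..<2 ^ q}. F (2 * u + 2 ^ Suc (Suc q)))"
    unfolding atLeastLessThan_power2_Suc
    by (subst sum.union_disjoint) (auto simp: Gamma_def sum.reindex inj_on_def)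
  also have "(\<Sum>i\<in>Gamma (Suc q). F (i + 2 ^ Suc (Suc q))) = sum F (low_block (Suc (Suc q)))"
    by (simp add: low_block_def sum.reindex)
  also have "(\<Sum>u\<in>{1..<2 ^ q}. F (2 * u + 2 ^ Suc (Suc q))) = (\<Sum>u\<in>{1..<2 ^ q}. F (u + 2 ^ Suc q))"
    using F by (intro sum.cong refl) (metis distrib_left power_Suc)
  finally show ?case
    using Suc by (simp add: sum.lessThan_Suc_shift del: sum.lessThan_Suc)
qed simp

lemma sum_Gamma_low_blocks_add_2:
  fixes F :: "nat \<Rightarrow> 'b::comm_monoid_add"
  assumes "g \<ge> 2"
  shows "(\<Sum>k<g + 2 - 1. sum F (Gamma (Suc k)) + sum F (low_block (g + 2 - k)))
    = (\<Sum>k<g - 1. sum F (Gamma (Suc k)) + sum F (low_block (g - k)))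
      + sum F (Gamma g) + sum F (Gamma (Suc g)) + sum F (low_block (g + 2)) + sum F (low_block (g + 1))"
proof -
  obtain d where d: "g = Suc d"
    using assms by (cases g) auto
  have n: "g + 2 - 1 = Suc (Suc (g - 1))"
    using assms by auto
  have "(\<Sum>k<g + 2 - 1. sum F (Gamma (Suc k)))
      = (\<Sum>k<g - 1. sum F (Gamma (Suc k))) + sum F (Gamma g) + sum F (Gamma (Suc g))"
    unfolding n d by simp
  moreover have "(\<Sum>k<g + 2 - 1. sum F (low_block (g + 2 - k)))
      = sum F (low_block (g + 2)) + sum F (low_block (g + 1)) + (\<Sum>k<g - 1. sum F (low_block (g - k)))"
    unfolding n sum.lessThan_Suc_shift using assms by (simp add: add.assoc)
  ultimately show ?thesis
    by (simp add: sum.distrib add_ac)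
qed

lemma sum_coset_leaders_recursion:
  fixes F :: "nat \<Rightarrow> 'b::comm_ring_1"
  assumes char: "CHAR('b) = 2" and h: "h \<ge> 2"
  shows "sum F (coset_leaders h) = F 3 + (\<Sum>k<h - 1. sum F (Gamma (Suc k)) + sum F (low_block (h - k)))"
  using h
proof (induction h rule: less_induct)
  case (less h)
  have double: "x + x = 0" "x + (x + y) = y" for x y :: 'b
    using uminus_CHAR_2[OF char, of x] by (metis add.right_inverse, metis add.assoc add.right_inverse add_0)
  consider "h = 2" | "h = 3" | "h \<ge> 4"
    using less.prems by linarith
  then show ?case
  proof cases
    case 1
    have "low_block 2 = {5}"
      by (auto simp: low_block_def)
    with 1 show ?thesis
      by (simp add: sum.coset_leaders_decomp even_indices_empty extra_leaders_def add_ac)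
  next
    case 2
    have "low_block 2 = {5}"
      by (auto simp: low_block_def)
    have "(\<Sum>k<h - 1. sum F (Gamma (Suc k)) + sum F (low_block (h - k)))
        = (F 1 + sum F (low_block 3)) + ((F 1 + F 3) + F 5)"
      using 2 \<open>low_block 2 = {5}\<close> by (simp add: numeral_2_eq_2 Gamma_2[unfolded numeral_2_eq_2])
    with 2 show ?thesis
      by (simp add: sum.coset_leaders_decomp even_indices_empty extra_leaders_def add_ac double)
  next
    case 3
    define g where "g = h - 2"
    have g: "h = g + 2" "g \<ge> 2"
      using 3 by (auto simp: g_def)
    have IH: "sum F (coset_leaders g) = F 3 + (\<Sum>k<g - 1. sum F (Gamma (Suc k)) + sum F (low_block (g - k)))"
      using less.IH g by simp
    have S: "(\<Sum>k<h - 1. sum F (Gamma (Suc k)) + sum F (low_block (h - k)))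
        = (\<Sum>k<g - 1. sum F (Gamma (Suc k)) + sum F (low_block (g - k)))
          + sum F (Gamma g) + sum F (Gamma (Suc g)) + sum F (low_block (g + 2)) + sum F (low_block (g + 1))"
      unfolding g(1) using g(2) by (rule sum_Gamma_low_blocks_add_2)
    have CL: "sum F (coset_leaders h) + sum F (low_block g) = sum F (coset_leaders g)
        + (sum F (low_block (g + 2)) + (sum F (low_block (g + 1)) + sum F (high_block g)))"
      using sum.coset_leaders_add_2[OF g(2)] g by simp
    have "sum F (coset_leaders h) = (sum F (coset_leaders h) + sum F (low_block g)) + sum F (low_block g)"
      by (simp only: add.assoc double add_0_right)
    also have "\<dots> = F 3 + (\<Sum>k<g - 1. sum F (Gamma (Suc k)) + sum F (low_block (g - k)))
        + (sum F (low_block (g + 2)) + (sum F (low_block (g + 1)) + sum F (high_block g)))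
        + sum F (low_block g)"
      by (simp only: CL IH)
    also have "\<dots> = F 3 + (\<Sum>k<h - 1. sum F (Gamma (Suc k)) + sum F (low_block (h - k)))"
      unfolding S sum_Gamma_Suc[OF order.trans[OF one_le_numeral g(2)]] by (simp only: add_ac double)
    finally show ?thesis .
  qed
qed

lemma sum_coset_leaders:
  fixes F :: "nat \<Rightarrow> 'b::comm_ring_1"
  assumes char: "CHAR('b) = 2" and h: "h \<ge> 2" and F: "\<And>v. F (2 * v) = F v"
  shows "F 3 + (\<Sum>u\<in>{1..<2 ^ (h - 1)}. F u + F (u + 2 ^ h)) = sum F (coset_leaders h)"
proof -
  have "(\<Sum>u\<in>{1..<2 ^ (h - 1)}. F (u + 2 ^ Suc (h - 1)))
      = (\<Sum>k<h - 1. sum F (low_block (Suc (h - 1) - k)))"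
    by (rule sum_atLeastLessThan_power2_shift_odd_parts) (rule F)
  moreover have "Suc (h - 1) = h"
    using h by simp
  moreover have "(\<Sum>u\<in>{1..<2 ^ (h - 1)}. F u) = (\<Sum>k<h - 1. sum F (Gamma (Suc k)))"
    by (rule sum_atLeastLessThan_power2_odd_parts) (rule F)
  ultimately show ?thesis
    unfolding sum_coset_leaders_recursion[OF char h] sum.distrib by (simp add: add.assoc)
qed

lemma card_coset_leaders:
  assumes "h \<ge> 2"
  shows "card (coset_leaders h) = (if even h then 2 ^ (h - 1) + 1 else 2 ^ (h - 1) - 1)"
  using assms
proof (induction h rule: less_induct)
  case (less h)
  have low2: "low_block 2 = {5}"
    by (auto simp: low_block_def)
  have small: "card (coset_leaders h) = card (low_block h) + card (extra_leaders h)" if "h \<in> {2, 3}"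
    using sum.coset_leaders_decomp[of h "\<lambda>_. 1::nat"] that by (auto simp: even_indices_empty)
  consider "h = 2" | "h = 3" | "h \<ge> 4"
    using less.prems by linarith
  then show ?case
  proof cases
    case 1
    then show ?thesis
      using small low2 by (simp add: extra_leaders_def)
  next
    case 2
    have "card (low_block 3) = 2"
      using card_low_block[of 1] by (simp add: numeral_3_eq_3)
    with 2 show ?thesis
      using small by (simp add: extra_leaders_def)
  next
    case 3
    obtain d where d: "h = d + 4"
      using 3 by (metis add.commute le_add_diff_inverse)
    have "card (coset_leaders (d + 2 + 2)) + card (low_block (d + 2)) = card (coset_leaders (d + 2))
        + (card (low_block (d + 2 + 2)) + (card (low_block (d + 2 + 1)) + card (high_block (d + 2))))"
      using sum.coset_leaders_add_2[of "d + 2" "\<lambda>_. 1 :: nat"] by simp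
    moreover have "card (low_block (d + 2 + 2)) = 2 ^ (d + 2)" "card (low_block (d + 2 + 1)) = 2 ^ (d + 1)"
      "card (low_block (d + 2)) = 2 ^ d" "card (high_block (d + 2)) = 2 ^ d"
      using card_low_block card_high_block by (simp_all add: numeral_2_eq_2 numeral_3_eq_3)
    moreover have "card (coset_leaders (d + 2)) = (if even d then 2 ^ (d + 1) + 1 else 2 ^ (d + 1) - 1)"
      using less.IH[of "d + 2"] d by simp
    moreover have "(2::nat) ^ (d + 2 + 2 - 1) = 8 * 2 ^ d" "(2::nat) ^ (d + 2) = 4 * 2 ^ d"
      "(2::nat) ^ (d + 1) = 2 * 2 ^ d" "(1::nat) \<le> 2 ^ d"
      by (simp_all add: power_add)
    moreover have "h = d + 2 + 2"
      using d by simp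
    ultimately show ?thesis
      by (cases "even d") auto
  qed
qed

section \<open>The trace of \<open>f\<^sub>4(x + 1)\<close>\<close>

lemma power_two_pow_minus_1_add_1:
  fixes z :: "'a::field"
  assumes char: "CHAR('a) = 2" and N: "N \<ge> 1"
  shows "(z + 1) ^ (2 ^ N - 1) = (\<Sum>u<2 ^ N. z ^ u)"
proof (cases "z + 1 = 0")
  case True
  have "(2::nat) ^ N - 1 \<noteq> 0"
    using one_less_power[of "2::nat" N] N by simp
  then have "(z + 1) ^ (2 ^ N - 1) = 0"
    using True by simp
  moreover have "z = 1"
    using True uminus_CHAR_2[OF char, of z] by (simp add: add_eq_0_iff2)
  then have "(\<Sum>u<2 ^ N. z ^ u) = of_nat (2 ^ N)"
    by simp
  moreover have "of_nat (2 ^ N) = (0::'a)"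
    unfolding of_nat_eq_0_iff_char_dvd char using N by simp
  ultimately show ?thesis
    by (simp only:)
next
  case False
  have "(z + 1) * (\<Sum>u<2 ^ N. z ^ u) = z ^ 2 ^ N + 1"
    using one_diff_power_eq[of z "2 ^ N"] unfolding minus_CHAR_2[OF char] by (simp add: add.commute)
  also have "\<dots> = (z + 1) ^ 2 ^ N"
    using add_power_two_pow_CHAR_2[OF char, of z 1 N] by simp
  also have "\<dots> = (z + 1) * (z + 1) ^ (2 ^ N - 1)"
    using power_Suc[of "z + 1" "2 ^ N - 1"] by simp
  finally show ?thesis
    using False by simp
qed

text \<open>Writing \<open>2 ^ m - 2 ^ (h + 2) + 2 = 2 + 2 ^ (h + 2) * (2 ^ (h - 1) - 1)\<close> expands the third
  term of \<open>f\<^sub>4(x + 1)\<close> into a geometric sum in \<open>x ^ 2 ^ (h + 2)\<close>.\<close>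

lemma f4_shift_expansion:
  fixes x :: "'a::field"
  assumes char: "CHAR('a) = 2" and m: "m = 2 * h + 1" and h: "h \<ge> 2"
  shows "(x + 1) + (x + 1) ^ 3 + (x + 1) ^ (2 ^ m - 2 ^ (h + 2) + 2)
       = 1 + x ^ 3 + (\<Sum>u\<in>{1..<2 ^ (h - 1)}. x ^ (u * 2 ^ (h + 2)) + x ^ (u * 2 ^ (h + 2) + 2))"
proof -
  have "m = (h + 2) + (h - 1)"
    using h m by simp
  then have "(2::nat) ^ m = 2 ^ (h + 2) * 2 ^ (h - 1)"
    by (simp only: power_add)
  then have exponent: "2 ^ m - 2 ^ (h + 2) + 2 = 2 + 2 ^ (h + 2) * (2 ^ (h - 1) - 1::nat)"
    by (simp add: right_diff_distrib')
  define y where "y = x ^ 2 ^ (h + 2)"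
  have "(x + 1) ^ (2 ^ m - 2 ^ (h + 2) + 2) = (x + 1) ^ 2 * ((x + 1) ^ 2 ^ (h + 2)) ^ (2 ^ (h - 1) - 1)"
    unfolding exponent by (simp only: power_add power_mult)
  also have "(x + 1) ^ 2 ^ (h + 2) = y + 1"
    unfolding y_def using add_power_two_pow_CHAR_2[OF char, of x 1 "h + 2"] by (simp only: power_one)
  also have "(y + 1) ^ (2 ^ (h - 1) - 1) = (\<Sum>u<2 ^ (h - 1). y ^ u)"
    using h by (intro power_two_pow_minus_1_add_1 char) simp
  also have "\<dots> = 1 + (\<Sum>u\<in>{1..<2 ^ (h - 1)}. y ^ u)"
    by (simp add: sum.atLeast_Suc_lessThan_Suc_shift lessThan_atLeast0 sum.atLeast_Suc_lessThan)
  also have "(x + 1) ^ 2 = x ^ 2 + 1"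
    using add_power_two_pow_CHAR_2[OF char, of x 1 1] by simp
  finally have "(x + 1) ^ (2 ^ m - 2 ^ (h + 2) + 2) = (x ^ 2 + 1) * (1 + (\<Sum>u\<in>{1..<2 ^ (h - 1)}. y ^ u))" .
  moreover have "(x ^ 2 + 1) * y ^ u = x ^ (u * 2 ^ (h + 2)) + x ^ (u * 2 ^ (h + 2) + 2)" for u
    by (simp add: y_def algebra_simps power_add power_mult[symmetric] mult.commute power2_eq_square)
  ultimately have E: "(x + 1) ^ (2 ^ m - 2 ^ (h + 2) + 2)
      = x ^ 2 + 1 + (\<Sum>u\<in>{1..<2 ^ (h - 1)}. x ^ (u * 2 ^ (h + 2)) + x ^ (u * 2 ^ (h + 2) + 2))"
    by (simp only: distrib_left sum_distrib_left mult_1_right)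
  have two: "(2::'a) = 0"
    using of_nat_CHAR[where 'a='a] char by simp
  have "(x + 1) ^ 3 = x ^ 3 + x ^ 2 + x + 1 + 2 * (x ^ 2 + x)"
    by (simp add: eval_nat_numeral algebra_simps)
  then have C: "(x + 1) ^ 3 = x ^ 3 + x ^ 2 + x + 1"
    by (simp only: two mult_zero_left add_0_right)
  show ?thesis
    unfolding E C by (simp add: ac_simps) (simp add: algebra_simps two)
qed

lemma Tr_power_double:
  assumes "CARD('a::{field,finite}) = 2 ^ m"
  shows "Tr m ((x::'a) ^ (2 * v)) = Tr m (x ^ v)"
  using Tr_power2[OF assms, of "x ^ v"] by (simp add: power_mult[symmetric] mult.commute)

lemma Tr_power_mult_two_pow:
  assumes "CARD('a::{field,finite}) = 2 ^ m"
  shows "Tr m ((x::'a) ^ (v * 2 ^ k)) = Tr m (x ^ v)"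
proof (induction k)
  case (Suc k)
  have "v * 2 ^ Suc k = 2 * (v * 2 ^ k)"
    by simp
  then show ?case
    using Suc Tr_power_double[OF assms, of x "v * 2 ^ k"] by (simp only:)
qed simp

lemma Tr_f4_shift:
  fixes x :: "'a::{field,finite}"
  assumes card: "CARD('a) = 2 ^ m" and m: "m = 2 * h + 1" and h: "h \<ge> 2"
  shows "Tr m ((x + 1) + (x + 1) ^ 3 + (x + 1) ^ (2 ^ m - 2 ^ (h + 2) + 2))
     = 1 + (\<Sum>r\<in>coset_leaders h. Tr m (x ^ r))"
proof -
  have char: "CHAR('a) = 2"
    using card by (rule CHAR_eq_2_if_CARD_eq_power_2)
  have wrap: "Tr m (x ^ (u * 2 ^ (h + 2) + 2)) = Tr m (x ^ (u + 2 ^ h))" for u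
  proof -
    have "u * 2 ^ (h + 2) + 2 = (u * 2 ^ (h + 1) + 1) * 2 ^ 1"
      by simp
    then have "Tr m (x ^ (u * 2 ^ (h + 2) + 2)) = Tr m (x ^ (u * 2 ^ (h + 1) + 1))"
      by (simp only: Tr_power_mult_two_pow[OF card])
    also have "\<dots> = Tr m (x ^ ((u * 2 ^ (h + 1) + 1) * 2 ^ h))"
      by (rule Tr_power_mult_two_pow[OF card, symmetric])
    also have "(u * 2 ^ (h + 1) + 1) * 2 ^ h = u * 2 ^ m + 2 ^ h"
      using m by (simp add: algebra_simps flip: power_add)
    also have "x ^ (u * 2 ^ m + 2 ^ h) = x ^ (u + 2 ^ h)"
    proof -
      have "x ^ (u * 2 ^ m) = (x ^ 2 ^ m) ^ u"
        by (metis mult.commute power_mult)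
      then show ?thesis
        using power_CARD_eq_self[of x] card by (simp add: power_add)
    qed
    finally show ?thesis .
  qed
  have "odd m"
    using m by simp
  have "Tr m ((x + 1) + (x + 1) ^ 3 + (x + 1) ^ (2 ^ m - 2 ^ (h + 2) + 2))
     = Tr m 1 + Tr m (x ^ 3)
       + (\<Sum>u\<in>{1..<2 ^ (h - 1)}. Tr m (x ^ (u * 2 ^ (h + 2))) + Tr m (x ^ (u * 2 ^ (h + 2) + 2)))"
    unfolding f4_shift_expansion[OF char m h] by (simp only: Tr_add[OF char] Tr_sum[OF char])
  also have "\<dots> = 1 + Tr m (x ^ 3) + (\<Sum>u\<in>{1..<2 ^ (h - 1)}. Tr m (x ^ u) + Tr m (x ^ (u + 2 ^ h)))"
    by (simp only: Tr_1[OF char \<open>odd m\<close>] Tr_power_mult_two_pow[OF card] wrap)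
  also have "\<dots> = 1 + (\<Sum>r\<in>coset_leaders h. Tr m (x ^ r))"
    using sum_coset_leaders[OF char h, of "\<lambda>v. Tr m (x ^ v)"] Tr_power_double[OF card]
    by (simp add: add.assoc)
  finally show ?thesis .
qed

section \<open>Cyclotomic cosets modulo \<open>2 ^ m - 1\<close>\<close>

lemma power_primitive_elem_eq_iff:
  fixes \<alpha> :: "'a::{field,finite}"
  assumes prim: "primitive_elem \<alpha>"
  shows "\<alpha> ^ a = \<alpha> ^ b \<longleftrightarrow> [a = b] (mod CARD('a) - 1)"
proof -
  define n where "n = CARD('a) - 1"
  have "\<alpha> \<noteq> 0"
    using prim by (simp add: primitive_elem_def)
  have "CARD('a) \<noteq> 1"
    using of_nat_CARD_eq_0[where 'a='a] by auto
  moreover have "CARD('a) > 0"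
    by simp
  ultimately have "n > 0"
    unfolding n_def by linarith
  have period: "\<alpha> ^ k = \<alpha> ^ (k mod n)" for k
  proof -
    have "\<alpha> ^ k = (\<alpha> ^ n) ^ (k div n) * \<alpha> ^ (k mod n)"
      by (metis div_mult_mod_eq power_add power_mult mult.commute)
    then show ?thesis
      using power_CARD_minus_1_eq_1[OF \<open>\<alpha> \<noteq> 0\<close>] by (simp add: n_def)
  qed
  have "(\<lambda>k. \<alpha> ^ k) ` {..<n} = UNIV - {0}"
  proof
    show "UNIV - {0} \<subseteq> (\<lambda>k. \<alpha> ^ k) ` {..<n}"
    proof
      fix x :: 'a assume "x \<in> UNIV - {0}"
      then obtain k where "x = \<alpha> ^ k"
        using prim by (auto simp: primitive_elem_def)
      then have "x = \<alpha> ^ (k mod n)" "k mod n < n"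
        using period \<open>n > 0\<close> by auto
      then show "x \<in> (\<lambda>k. \<alpha> ^ k) ` {..<n}"
        by blast
    qed
  qed (use \<open>\<alpha> \<noteq> 0\<close> in auto)
  then have "inj_on (\<lambda>k. \<alpha> ^ k) {..<n}"
    by (intro eq_card_imp_inj_on) (simp_all add: card_Diff_singleton n_def)
  then have "\<alpha> ^ (a mod n) = \<alpha> ^ (b mod n) \<longleftrightarrow> a mod n = b mod n"
    using \<open>n > 0\<close> by (auto dest: inj_onD)
  then show ?thesis
    unfolding cong_def period[of a] period[of b] n_def[symmetric] .
qed

text \<open>Odd numbers below \<open>2 ^ (h + 1)\<close> lie in pairwise distinct cyclotomic cosets
  \<open>{r * 2 ^ i mod (2 ^ m - 1) | i < m}\<close>, each of full size \<open>m = 2 * h + 1\<close>.\<close>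

locale cyclotomic_cosets =
  fixes m h :: nat
  assumes m_eq: "m = 2 * h + 1" and h_pos: "h \<ge> 1"
begin

lemma power2_Suc_h_less: "2 ^ Suc h < (2::nat) ^ m - 1"
proof -
  have "(2::nat) ^ Suc (Suc h) \<le> 2 ^ m"
    using h_pos m_eq by (intro power_increasing) auto
  moreover have "(2::nat) ^ Suc (Suc h) = 4 * 2 ^ h" "(2::nat) ^ Suc h = 2 * 2 ^ h" "(1::nat) \<le> 2 ^ h"
    by simp_all
  ultimately show ?thesis
    by linarith
qed

lemma power2_m_cong_1: "[2 ^ m = 1] (mod 2 ^ m - 1 :: nat)"
proof -
  have "(2::nat) ^ m = (2 ^ m - 1) + 1"
    by simp
  then show ?thesis
    by (metis cong_def mod_add_self1)
qed

lemma odd_mult_power2_not_cong: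
  fixes v v' k :: nat
  assumes "odd v" "v < 2 ^ Suc h" "v' < 2 ^ Suc h" "0 < k" "k \<le> h"
  shows "\<not> [v' * 2 ^ k = v] (mod 2 ^ m - 1)"
proof
  assume cong: "[v' * 2 ^ k = v] (mod 2 ^ m - 1)"
  have "(2::nat) ^ k \<le> 2 ^ h"
    using assms(5) by (intro power_increasing) auto
  then have "v' * 2 ^ k < 2 ^ Suc h * 2 ^ h"
    using assms(3) by (intro mult_less_le_imp_less) auto
  also have "(2::nat) ^ Suc h * 2 ^ h = 2 ^ m"
    by (simp add: m_eq power_add[symmetric])
  finally have "v' * 2 ^ k < 2 ^ m" .
  moreover have "even (v' * 2 ^ k)" "odd ((2::nat) ^ m - 1)"
    using assms(4) m_eq by simp_all
  ultimately have "v' * 2 ^ k < 2 ^ m - 1"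
    by (metis Suc_pred' less_Suc_eq zero_less_power zero_less_numeral)
  then have "v' * 2 ^ k = v"
    using cong power2_Suc_h_less assms(2) unfolding cong_def by simp
  then show False
    using \<open>even (v' * 2 ^ k)\<close> \<open>odd v\<close> by simp
qed

lemma odd_mult_power2_cong_imp_eq:
  fixes v v' k :: nat
  assumes v: "odd v" "v < 2 ^ Suc h" and v': "odd v'" "v' < 2 ^ Suc h"
    and k: "k < m" and cong: "[v' * 2 ^ k = v] (mod 2 ^ m - 1)"
  shows "k = 0 \<and> v' = v"
proof -
  consider "k = 0" | "0 < k" "k \<le> h" | "h < k"
    by linarith
  then show ?thesis
  proof cases
    case 1
    then show ?thesis
      using cong power2_Suc_h_less v v' unfolding cong_def by simp
  next
    case 2
    then show ?thesis
      using odd_mult_power2_not_cong[OF v(1,2) v'(2)] cong by blast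
  next
    case 3
    define k' where "k' = m - k"
    have k': "0 < k'" "k' \<le> h"
      using k 3 m_eq by (auto simp: k'_def)
    have "[v * 2 ^ k' = v' * 2 ^ k * 2 ^ k'] (mod 2 ^ m - 1)"
      using cong by (simp add: cong_scalar_right cong_sym)
    also have "v' * 2 ^ k * 2 ^ k' = v' * 2 ^ m"
      using k by (simp add: k'_def power_add[symmetric])
    also have "[v' * 2 ^ m = v' * 1] (mod 2 ^ m - 1)"
      by (intro cong_scalar_left power2_m_cong_1)
    finally show ?thesis
      using odd_mult_power2_not_cong[OF v'(1,2) v(2) k'] by simp
  qed
qed

lemma cyclotomic_coset_elements_inj:
  fixes r r' i i' :: nat
  assumes r: "odd r" "r < 2 ^ Suc h" and r': "odd r'" "r' < 2 ^ Suc h"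
    and i: "i < m" and i': "i' < m" and cong: "[r * 2 ^ i = r' * 2 ^ i'] (mod 2 ^ m - 1)"
  shows "r = r' \<and> i = i'"
proof -
  have *: "a = b \<and> j = j'"
    if a: "odd a" "a < 2 ^ Suc h" and b: "odd b" "b < 2 ^ Suc h"
      and j: "j \<le> j'" "j' < m" and c: "[a * 2 ^ j = b * 2 ^ j'] (mod 2 ^ m - 1)"
    for a b j j' :: nat
  proof -
    have "[a = a * 2 ^ m] (mod 2 ^ m - 1)"
      using cong_scalar_left[OF power2_m_cong_1, of a] by (simp add: cong_sym_eq)
    also have "a * 2 ^ m = a * 2 ^ j * 2 ^ (m - j)"
      using j by (simp add: power_add[symmetric])
    also have "[\<dots> = b * 2 ^ j' * 2 ^ (m - j)] (mod 2 ^ m - 1)"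
      using c by (rule cong_scalar_right)
    also have "b * 2 ^ j' * 2 ^ (m - j) = b * 2 ^ (j' - j) * 2 ^ m"
      using j by (simp add: power_add[symmetric])
    also have "[\<dots> = b * 2 ^ (j' - j) * 1] (mod 2 ^ m - 1)"
      by (intro cong_scalar_left power2_m_cong_1)
    finally have "[b * 2 ^ (j' - j) = a] (mod 2 ^ m - 1)"
      by (simp add: cong_sym_eq)
    moreover have "j' - j < m"
      using j by linarith
    ultimately have "j' - j = 0 \<and> b = a"
      by (intro odd_mult_power2_cong_imp_eq[OF a b])
    then show ?thesis
      using j by auto
  qed
  show ?thesis
  proof (cases "i \<le> i'")
    case True
    then show ?thesis using *[OF r r' True i' cong] by blast
  next
    case False
    then show ?thesis using *[OF r' r _ i, of i'] cong by (auto simp: cong_sym)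
  qed
qed

lemma mult_power2_not_cong_0:
  fixes r i :: nat
  assumes "0 < r" "r < 2 ^ Suc h"
  shows "\<not> [r * 2 ^ i = 0] (mod 2 ^ m - 1)"
proof
  assume "[r * 2 ^ i = 0] (mod 2 ^ m - 1)"
  then have "2 ^ m - 1 dvd r * 2 ^ i"
    by (simp add: cong_0_iff)
  moreover have "coprime ((2::nat) ^ m - 1) (2 ^ i)"
    using m_eq by simp
  ultimately have "2 ^ m - 1 dvd r"
    using coprime_dvd_mult_left_iff by blast
  then show False
    using assms power2_Suc_h_less by (auto dest: dvd_imp_le)
qed

end

section \<open>The sequence of \<open>f\<^sub>4\<close>\<close>

locale f4_sequence = cyclotomic_cosets m h for m h +
  fixes \<alpha> :: "'a::{field,finite}"
  assumes card: "CARD('a) = 2 ^ m" and h_ge_2: "h \<ge> 2" and prim: "primitive_elem \<alpha>"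
begin

lemma power_alpha_eq_iff: "\<alpha> ^ a = \<alpha> ^ b \<longleftrightarrow> [a = b] (mod 2 ^ m - 1)"
  using power_primitive_elem_eq_iff[OF prim] card by simp

lemma min_poly_F2_inverse_power:
  assumes r: "odd r" "r < 2 ^ Suc h"
  shows "min_poly_F2 (inverse (\<alpha> ^ r)) = (\<Prod>i<m. [:- inverse (\<alpha> ^ (r * 2 ^ i)), 1:])"
proof -
  have conj: "inverse (\<alpha> ^ r) ^ 2 ^ i = inverse (\<alpha> ^ (r * 2 ^ i))" for i
    by (simp add: power_inverse power_mult)
  have "inj_on (\<lambda>i. inverse (\<alpha> ^ r) ^ 2 ^ i) {..<m}"
  proof (rule inj_onI)
    fix i i' assume "i \<in> {..<m}" "i' \<in> {..<m}" "inverse (\<alpha> ^ r) ^ 2 ^ i = inverse (\<alpha> ^ r) ^ 2 ^ i'"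
    then show "i = i'"
      using cyclotomic_coset_elements_inj[OF r r] by (simp add: conj power_alpha_eq_iff)
  qed
  then show ?thesis
    using min_poly_F2_eq_prod_conjugates[OF card] by (simp add: conj)
qed

definition f4_terms :: "'a set" where
  "f4_terms = insert 1 ((\<lambda>(r, i). \<alpha> ^ (r * 2 ^ i)) ` (coset_leaders h \<times> {..<m}))"

lemma inj_on_coset_terms: "inj_on (\<lambda>(r, i). \<alpha> ^ (r * 2 ^ i)) (coset_leaders h \<times> {..<m})"
proof (rule inj_onI, clarify)
  fix r i r' i'
  assume "r \<in> coset_leaders h" "i < m" "r' \<in> coset_leaders h" "i' < m"
    and "\<alpha> ^ (r * 2 ^ i) = \<alpha> ^ (r' * 2 ^ i')"
  then show "r = r' \<and> i = i'"
    using cyclotomic_coset_elements_inj[of r r' i i'] coset_leaders_bounds[OF h_ge_2]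
    by (simp add: power_alpha_eq_iff)
qed

lemma one_notin_coset_terms: "1 \<notin> (\<lambda>(r, i). \<alpha> ^ (r * 2 ^ i)) ` (coset_leaders h \<times> {..<m})"
  using mult_power2_not_cong_0 coset_leaders_bounds[OF h_ge_2] power_alpha_eq_iff[of _ 0]
  by force

lemma zero_notin_f4_terms: "0 \<notin> f4_terms"
  using prim by (auto simp: f4_terms_def primitive_elem_def)

lemma card_f4_terms: "card f4_terms = 1 + m * card (coset_leaders h)"
  using inj_on_coset_terms one_notin_coset_terms
  by (simp add: f4_terms_def card_image card_cartesian_product)

lemma f4_sequence_eq_power_sum:
  assumes s: "\<And>t. s t = Tr m (let y = \<alpha> ^ t + 1 in y + y ^ 3 + y ^ (2 ^ m - 2 ^ (h + 2) + 2))"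
  shows "s t = (\<Sum>b\<in>f4_terms. b ^ t)"
proof -
  have "s t = 1 + (\<Sum>r\<in>coset_leaders h. \<Sum>i<m. (\<alpha> ^ (r * 2 ^ i)) ^ t)"
    using Tr_f4_shift[OF card m_eq h_ge_2, of "\<alpha> ^ t"]
    by (simp add: s Tr_def Let_def power_mult[symmetric] mult_ac)
  also have "\<dots> = 1 + (\<Sum>b\<in>(\<lambda>(r, i). \<alpha> ^ (r * 2 ^ i)) ` (coset_leaders h \<times> {..<m}). b ^ t)"
    using inj_on_coset_terms by (simp add: sum.cartesian_product sum.reindex case_prod_unfold)
  finally show ?thesis
    using one_notin_coset_terms by (simp add: f4_terms_def)
qed

lemma prod_f4_terms:
  "(\<Prod>b\<in>f4_terms. [:- inverse b, 1:]) = (\<Prod>r\<in>coset_leaders h. min_poly_F2 (inverse (\<alpha> ^ r))) * [:-1, 1:]"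
proof -
  have "(\<Prod>b\<in>(\<lambda>(r, i). \<alpha> ^ (r * 2 ^ i)) ` (coset_leaders h \<times> {..<m}). [:- inverse b, 1:])
      = (\<Prod>r\<in>coset_leaders h. \<Prod>i<m. [:- inverse (\<alpha> ^ (r * 2 ^ i)), 1:])"
    using inj_on_coset_terms by (simp add: prod.reindex prod.cartesian_product case_prod_unfold)
  also have "\<dots> = (\<Prod>r\<in>coset_leaders h. min_poly_F2 (inverse (\<alpha> ^ r)))"
    using min_poly_F2_inverse_power coset_leaders_bounds[OF h_ge_2] by simp
  finally show ?thesis
    using one_notin_coset_terms by (simp add: f4_terms_def mult.commute)
qed

lemma F2_poly_prod_f4_terms: "F2_poly (\<Prod>b\<in>f4_terms. [:- inverse b, 1:])"
proof -
  have char: "CHAR('a) = 2"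
    using card by (rule CHAR_eq_2_if_CARD_eq_power_2)
  have "F2_poly (min_poly_F2 (inverse (\<alpha> ^ r)))" if "r \<in> coset_leaders h" for r
    using min_poly_F2_inverse_power coset_leaders_bounds[OF h_ge_2 that]
      F2_poly_prod_conjugates[OF card, of "inverse (\<alpha> ^ r)"]
    by (simp add: power_inverse power_mult)
  moreover have "F2_poly [:-1, 1::'a:]"
  proof -
    have "-1 = (1::'a)"
      by (rule uminus_CHAR_2[OF char])
    then show ?thesis
      by (auto simp: F2_poly_def coeff_pCons split: nat.splits)
  qed
  ultimately show ?thesis
    unfolding prod_f4_terms by (intro F2_poly_mult F2_poly_prod char)
qed

theorem seq_min_poly_f4:
  assumes s: "\<And>t. s t = Tr m (let y = \<alpha> ^ t + 1 in y + y ^ 3 + y ^ (2 ^ m - 2 ^ (h + 2) + 2))"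
  shows "seq_min_poly s = (\<Prod>r\<in>coset_leaders h. min_poly_F2 (inverse (\<alpha> ^ r))) * [:-1, 1:]"
    and "lin_span s = 1 + m * card (coset_leaders h)"
  using seq_min_poly_power_sum[OF zero_notin_f4_terms f4_sequence_eq_power_sum[OF s] F2_poly_prod_f4_terms]
  by (simp_all add: prod_f4_terms card_f4_terms)

end

theorem lemma8:
  fixes \<alpha> :: "'a::{field,finite}" and m h :: nat and s :: "nat \<Rightarrow> 'a"
  assumes card: "CARD('a) = 2 ^ m"
    and m_odd: "odd m" and m_ge: "m \<ge> 5"
    and h_def: "h = (m - 1) div 2"
    and prim: "primitive_elem \<alpha>"
    and s_def: "\<And>t. s t = Tr m (let y = \<alpha> ^ t + 1 in y + y ^ 3 + y ^ (2 ^ m - 2 ^ (h + 2) + 2))"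
  shows
   "(m mod 4 = 1 \<longrightarrow>
      seq_min_poly s =
        (\<Prod>i\<in>Gamma (h - 1). min_poly_F2 (inverse (\<alpha> ^ (i + 2 ^ h)))) *
        (\<Prod>j\<in>{j. 2 \<le> j \<and> j \<le> h - 2 \<and> even j}.
            (\<Prod>i\<in>Gamma (h - j). min_poly_F2 (inverse (\<alpha> ^ (i + 2 ^ (h + 1 - j))))) *
            (\<Prod>i\<in>Gamma (h - j) - Gamma (h - 1 - j). min_poly_F2 (inverse (\<alpha> ^ (i + 2 ^ (h - j)))))) *
        min_poly_F2 (inverse (\<alpha> ^ 3)) * min_poly_F2 (inverse \<alpha>) * [:-1, 1:]
      \<and> lin_span s = 1 + m * (2 ^ ((m - 3) div 2) + 1))
    \<and> (m mod 4 = 3 \<longrightarrow>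
      seq_min_poly s =
        (\<Prod>i\<in>Gamma (h - 1). min_poly_F2 (inverse (\<alpha> ^ (i + 2 ^ h)))) *
        (\<Prod>j\<in>{j. 2 \<le> j \<and> j \<le> h - 2 \<and> even j}.
            (\<Prod>i\<in>Gamma (h - j). min_poly_F2 (inverse (\<alpha> ^ (i + 2 ^ (h + 1 - j))))) *
            (\<Prod>i\<in>Gamma (h - j) - Gamma (h - 1 - j). min_poly_F2 (inverse (\<alpha> ^ (i + 2 ^ (h - j)))))) *
        min_poly_F2 (inverse (\<alpha> ^ 5)) * [:-1, 1:]
      \<and> lin_span s = 1 + m * (2 ^ ((m - 3) div 2) - 1))"
proof -
  have m: "m = 2 * h + 1"
    using m_odd h_def by presburger
  have "h \<ge> 2"
    using m_ge m by linarith
  then interpret f4_sequence m h \<alpha>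
    using card prim m by unfold_locales simp_all
  define P where "P = (\<Prod>i\<in>Gamma (h - 1). min_poly_F2 (inverse (\<alpha> ^ (i + 2 ^ h)))) *
        (\<Prod>j\<in>{j. 2 \<le> j \<and> j \<le> h - 2 \<and> even j}.
            (\<Prod>i\<in>Gamma (h - j). min_poly_F2 (inverse (\<alpha> ^ (i + 2 ^ (h + 1 - j))))) *
            (\<Prod>i\<in>Gamma (h - j) - Gamma (h - 1 - j). min_poly_F2 (inverse (\<alpha> ^ (i + 2 ^ (h - j))))))"
  have "(\<Prod>r\<in>coset_leaders h. min_poly_F2 (inverse (\<alpha> ^ r)))
      = P * (\<Prod>r\<in>extra_leaders h. min_poly_F2 (inverse (\<alpha> ^ r)))"
    unfolding prod.coset_leaders_decomp[OF h_ge_2] prod.low_block_reindex prod.high_block_reindex P_def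
      even_indices_def by (simp add: diff_commute)
  moreover have "m mod 4 = 1 \<longleftrightarrow> even h" "m mod 4 = 3 \<longleftrightarrow> odd h" "(m - 3) div 2 = h - 1"
    using m by presburger+
  ultimately show ?thesis
    using seq_min_poly_f4[OF s_def] card_coset_leaders[OF h_ge_2] unfolding P_def[symmetric]
    by (auto simp: extra_leaders_def mult.assoc)
qed

end
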